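(* Let $f:(\mathbb{R}^d)^n\to\mathbb{R}$ be a random layered network of the form $f=g\circ F_W$, where $F_W$ is a regular random convolutional layer with $d$ input channels and $g$ is a random layered network independent of $W$. Then $f$ is $\mathbb{SO}(d)$-invariant: for every $U\in\mathbb{SO}(d)$, the random function $Uf$ defined by $(Uf)(\vec{\mathbf{x}})=f(U^{-1}\vec{\mathbf{x}})$ has the same distribution as $f$.
   Context: $\mathbb{SO}(d)$ acts on $(\mathbb{R}^d)^n$ by $U\cdot(\mathbf{x}_1,\ldots,\mathbf{x}_n)=(U\mathbf{x}_1,\ldots,U\mathbf{x}_n)$. A layer is a map $\mathbf{x}\mapsto\sigma(W\mathbf{x})$ ($\sigma:\mathbb{R}\to\mathbb{R}$ applied coordinatewise); a layered network is a composition of layers. A convolutional layer of width $w$, stride $s$ (with $s\mid n-w$), $d_1$ input channels and $d_2\times(d_1w)$ weight matrix $W$ is $F_W(\vec{\mathbf{x}})=\left(\sigma(WT_{0}(\vec{\mathbf{x}})),\ldots,\sigma(WT_{\frac{n-w}{s}}(\vec{\mathbf{x}}))\right)$, where $T_i(\vec{\mathbf{x}})=(\mathbf{x}_{is+1},\ldots,\mathbf{x}_{is+w})\in\mathbb{R}^{d_1w}$. It is a regular random convolutional layer if $W$ is random and for every orthogonal $(d_1w)\times(d_1w)$ matrix $U$, $W$ and $WU$ have the same distribution. *)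

theory Defs
  imports "HOL-Probability.Probability"
begin

text \<open>Vectors and matrices are represented as nat-indexed functions, with explicit dimensions;
entries outside the relevant index range are irrelevant (or zero).\<close>

type_synonym vec = "nat \<Rightarrow> real"
type_synonym mat = "nat \<Rightarrow> nat \<Rightarrow> real"

definition matS :: "mat measure" where
  "matS = PiM UNIV (\<lambda>_. PiM UNIV (\<lambda>_. borel))"

definition mat_mul :: "nat \<Rightarrow> nat \<Rightarrow> nat \<Rightarrow> mat \<Rightarrow> mat \<Rightarrow> mat" where
  "mat_mul m k l A B = (\<lambda>i j. if i < m \<and> j < l then (\<Sum>p<k. A i p * B p j) else 0)"

definition orthogonal_mat :: "nat \<Rightarrow> mat \<Rightarrow> bool" where
  "orthogonal_mat k U \<longleftrightarrow>
     (\<forall>i<k. \<forall>j<k. (\<Sum>p<k. U p i * U p j) = (if i = j then 1 else 0))"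

definition mat_det :: "nat \<Rightarrow> mat \<Rightarrow> real" where
  "mat_det k U = (\<Sum>p\<in>{p. p permutes {..<k}}. of_int (sign p) * (\<Prod>i<k. U i (p i)))"

definition SO :: "nat \<Rightarrow> mat set" where
  "SO d = {U. orthogonal_mat d U \<and> mat_det d U = 1}"

definition mat_transpose :: "mat \<Rightarrow> mat" where
  "mat_transpose U = (\<lambda>i j. U j i)"

text \<open>Action of a d x d matrix V on (R^d)^n: (x_1,...,x_n) \<mapsto> (V x_1, ..., V x_n).
  An input is X :: nat \<Rightarrow> vec, X j being the (j+1)-th point (j < n).\<close>
definition act :: "nat \<Rightarrow> mat \<Rightarrow> (nat \<Rightarrow> vec) \<Rightarrow> (nat \<Rightarrow> vec)" where
  "act d V X = (\<lambda>j c. if c < d then (\<Sum>e<d. V c e * X j e) else 0)"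

definition layer :: "nat \<Rightarrow> nat \<Rightarrow> (real \<Rightarrow> real) \<Rightarrow> mat \<Rightarrow> vec \<Rightarrow> vec" where
  "layer m k \<sigma> A x = (\<lambda>i. if i < m then \<sigma> (\<Sum>j<k. A i j * x j) else 0)"

text \<open>Layered network with widths ks = [k_0,...,k_L], activations \<sigma>s (length L) and weights Ws l
  (a k_(l+1) x k_l matrix): composition of the first l layers.\<close>
primrec net :: "nat list \<Rightarrow> (real \<Rightarrow> real) list \<Rightarrow> (nat \<Rightarrow> mat) \<Rightarrow> nat \<Rightarrow> vec \<Rightarrow> vec" where
  "net ks \<sigma>s Ws 0 x = x"
| "net ks \<sigma>s Ws (Suc l) x = layer (ks ! Suc l) (ks ! l) (\<sigma>s ! l) (Ws l) (net ks \<sigma>s Ws l x)"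

text \<open>T_i(x) = (x_{is+1},...,x_{is+w}) in R^{d w} (0-based indices here).\<close>
definition conv_T :: "nat \<Rightarrow> nat \<Rightarrow> nat \<Rightarrow> nat \<Rightarrow> (nat \<Rightarrow> vec) \<Rightarrow> vec" where
  "conv_T d w s i X = (\<lambda>p. if p < d * w then X (i * s + p div d) (p mod d) else 0)"

text \<open>Convolutional layer F_W with width w, stride s, d input channels, d2 output channels;
  W is a d2 x (d w) matrix. Output: ((n-w)/s + 1) points of R^{d2}.\<close>
definition conv_layer :: "nat \<Rightarrow> nat \<Rightarrow> nat \<Rightarrow> nat \<Rightarrow> nat \<Rightarrow> (real \<Rightarrow> real) \<Rightarrow> mat
    \<Rightarrow> (nat \<Rightarrow> vec) \<Rightarrow> (nat \<Rightarrow> vec)" where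
  "conv_layer d w s n d2 \<sigma> W X =
     (\<lambda>i. if i \<le> (n - w) div s then layer d2 (d * w) \<sigma> W (conv_T d w s i X) else (\<lambda>_. 0))"

definition flatten :: "nat \<Rightarrow> nat \<Rightarrow> (nat \<Rightarrow> vec) \<Rightarrow> vec" where
  "flatten d2 m Y = (\<lambda>q. if q < m * d2 then Y (q div d2) (q mod d2) else 0)"

definition conv_net :: "nat \<Rightarrow> nat \<Rightarrow> nat \<Rightarrow> nat \<Rightarrow> nat \<Rightarrow> (real \<Rightarrow> real) \<Rightarrow> mat
    \<Rightarrow> nat list \<Rightarrow> (real \<Rightarrow> real) list \<Rightarrow> (nat \<Rightarrow> mat) \<Rightarrow> (nat \<Rightarrow> vec) \<Rightarrow> real" where
  "conv_net d w s n d2 \<sigma> W ks \<sigma>s Ws X =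
     net ks \<sigma>s Ws (length \<sigma>s) (flatten d2 ((n - w) div s + 1) (conv_layer d w s n d2 \<sigma> W X)) 0"

definition regular_random_matrix :: "'a measure \<Rightarrow> nat \<Rightarrow> nat \<Rightarrow> ('a \<Rightarrow> mat) \<Rightarrow> bool" where
  "regular_random_matrix M m k W \<longleftrightarrow> W \<in> measurable M matS \<and>
     (\<forall>U. orthogonal_mat k U \<longrightarrow> distr M matS W = distr M matS (\<lambda>\<omega>. mat_mul m k k (W \<omega>) U))"

definition indep_rv :: "'a measure \<Rightarrow> 'b measure \<Rightarrow> ('a \<Rightarrow> 'b) \<Rightarrow> 'c measure \<Rightarrow> ('a \<Rightarrow> 'c) \<Rightarrow> bool" where
  "indep_rv M S X T Y \<longleftrightarrow> X \<in> measurable M S \<and> Y \<in> measurable M T \<and>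
     prob_space.indep_set M
       (sigma_sets (space M) {X -` A \<inter> space M | A. A \<in> sets S})
       (sigma_sets (space M) {Y -` A \<inter> space M | A. A \<in> sets T})"

end

theory Submission
  imports "Jordan_Normal_Form.Determinant" Defs
begin

(* Rotating every input point by U^T changes each convolution window T_i(x) by the orthogonal
   block-diagonal matrix B = diag(U^T, ..., U^T), so the rotated network is the network with
   first-layer weight W B in place of W. Regularity gives W B ~ W, and as the remaining weights Ws
   are independent of W, the pairs (W B, Ws) and (W, Ws) have the same joint law; the network is a
   measurable function of this pair. *)

lemma sum_lessThan_mult_blocks:
  fixes f :: "nat \<Rightarrow> 'b::comm_monoid_add"
  shows "(\<Sum>p<d * w. f p) = (\<Sum>q<w. \<Sum>e<d. f (q * d + e))"
proof -
  have "(\<Sum>e<d. f (q * d + e)) = sum f {q * d..<q * d + d}" for q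
    using sum.shift_bounds_nat_ivl[of f 0 "q * d" d] by (simp add: atLeast0LessThan add.commute)
  then show ?thesis by (simp add: sum.nat_group mult.commute)
qed

lemma block_index_less:
  fixes q w e d :: nat
  assumes "q < w" "e < d"
  shows "q * d + e < d * w"
proof -
  have "q * d + e < (q + 1) * d" using assms(2) by simp
  also have "\<dots> \<le> w * d" using assms(1) by (intro mult_right_mono) auto
  finally show ?thesis by (simp add: mult.commute)
qed

lemma orthogonal_mat_transpose:
  assumes "orthogonal_mat d U"
  shows "orthogonal_mat d (mat_transpose U)"
  unfolding orthogonal_mat_def mat_transpose_def
proof (intro allI impI)
  fix i j assume ij: "i < d" "j < d"
  define A :: "real Matrix.mat" where "A = Matrix.mat d d (\<lambda>(i, j). U j i)"
  define B :: "real Matrix.mat" where "B = Matrix.mat d d (\<lambda>(i, j). U i j)"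
  have A: "A \<in> carrier_mat d d" and B: "B \<in> carrier_mat d d" by (auto simp: A_def B_def)
  have "A * B = 1\<^sub>m d"
    using assms by (intro eq_matI) (auto simp: A_def B_def scalar_prod_def atLeast0LessThan orthogonal_mat_def)
  then have "B * A = 1\<^sub>m d" by (rule mat_mult_left_right_inverse[OF A B])
  then have "(B * A) $$ (i, j) = 1\<^sub>m d $$ (i, j)" by simp
  then show "(\<Sum>p<d. U i p * U j p) = (if i = j then 1 else 0)"
    using ij by (simp add: A_def B_def scalar_prod_def atLeast0LessThan)
qed

text \<open>Indices are read as in conv_T: index p is channel p mod d of point p div d.\<close>
definition block_diag :: "nat \<Rightarrow> mat \<Rightarrow> mat" where
  "block_diag d V = (\<lambda>p j. if p div d = j div d then V (p mod d) (j mod d) else 0)"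

lemma block_diag_block_row:
  "e < d \<Longrightarrow> block_diag d V (q * d + e) j = (if q = j div d then V e (j mod d) else 0)"
  by (simp add: block_diag_def)

lemma block_diag_block_col:
  "e < d \<Longrightarrow> block_diag d V p (q * d + e) = (if p div d = q then V (p mod d) e else 0)"
  by (simp add: block_diag_def)

lemma orthogonal_mat_block_diag:
  assumes "orthogonal_mat d V"
  shows "orthogonal_mat (d * w) (block_diag d V)"
  unfolding orthogonal_mat_def
proof (intro allI impI)
  fix i j assume i: "i < d * w" and j: "j < d * w"
  then have "0 < d" by (cases d) auto
  have iw: "i div d < w" using i by (metis less_mult_imp_div_less mult.commute)
  let ?S = "\<Sum>e<d. V e (i mod d) * V e (j mod d)"
  have "(\<Sum>p<d * w. block_diag d V p i * block_diag d V p j)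
      = (\<Sum>q<w. \<Sum>e<d. block_diag d V (q * d + e) i * block_diag d V (q * d + e) j)"
    by (rule sum_lessThan_mult_blocks)
  also have "\<dots> = (\<Sum>q<w. if q = i div d \<and> q = j div d then ?S else 0)"
    by (intro sum.cong refl) (auto simp: block_diag_block_row intro!: sum.neutral)
  also have "\<dots> = (if i div d = j div d then ?S else 0)"
    using iw by (auto simp: sum.delta' intro!: sum.neutral)
  also have "\<dots> = (if i = j then 1 else 0)"
  proof -
    have "i = j \<longleftrightarrow> i div d = j div d \<and> i mod d = j mod d" by (metis div_mult_mod_eq)
    then show ?thesis using assms \<open>0 < d\<close> by (auto simp: orthogonal_mat_def)
  qed
  finally show "(\<Sum>p<d * w. block_diag d V p i * block_diag d V p j) = (if i = j then 1 else 0)" .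
qed

lemma conv_T_act:
  assumes "p < d * w"
  shows "conv_T d w s i (act d V X) p = (\<Sum>j<d * w. block_diag d V p j * conv_T d w s i X j)"
proof -
  have "0 < d" using assms by (cases d) auto
  have pw: "p div d < w" using assms by (metis less_mult_imp_div_less mult.commute)
  have "(\<Sum>j<d * w. block_diag d V p j * conv_T d w s i X j)
      = (\<Sum>q<w. \<Sum>e<d. block_diag d V p (q * d + e) * conv_T d w s i X (q * d + e))"
    by (rule sum_lessThan_mult_blocks)
  also have "\<dots> = (\<Sum>q<w. if q = p div d then \<Sum>e<d. V (p mod d) e * X (i * s + p div d) e else 0)"
    by (intro sum.cong refl) (auto simp: block_diag_block_col conv_T_def block_index_less)
  also have "\<dots> = conv_T d w s i (act d V X) p"
    using assms pw \<open>0 < d\<close> by (simp add: sum.delta' conv_T_def act_def)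
  finally show ?thesis by simp
qed

lemma layer_linear_input:
  assumes "\<And>p. p < k \<Longrightarrow> y p = (\<Sum>j<k. B p j * x j)"
  shows "layer m k \<tau> A y = layer m k \<tau> (mat_mul m k k A B) x"
proof -
  have "(\<Sum>j<k. A i j * y j) = (\<Sum>p<k. mat_mul m k k A B i p * x p)" if "i < m" for i
  proof -
    have "(\<Sum>j<k. A i j * y j) = (\<Sum>j<k. \<Sum>p<k. A i j * B j p * x p)"
      using assms by (simp add: sum_distrib_left mult.assoc)
    also have "\<dots> = (\<Sum>p<k. \<Sum>j<k. A i j * B j p * x p)" by (rule sum.swap)
    also have "\<dots> = (\<Sum>p<k. mat_mul m k k A B i p * x p)"
      using that by (simp add: mat_mul_def sum_distrib_right)
    finally show ?thesis .
  qed
  then show ?thesis by (auto simp: layer_def)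
qed

lemma conv_net_act:
  "conv_net d w s n d2 \<sigma> A ks \<sigma>s G (act d V X)
   = conv_net d w s n d2 \<sigma> (mat_mul d2 (d * w) (d * w) A (block_diag d V)) ks \<sigma>s G X"
proof -
  have "conv_layer d w s n d2 \<sigma> A (act d V X)
      = conv_layer d w s n d2 \<sigma> (mat_mul d2 (d * w) (d * w) A (block_diag d V)) X"
    unfolding conv_layer_def by (intro ext if_cong refl layer_linear_input conv_T_act)
  then show ?thesis by (simp add: conv_net_def)
qed

lemma measurable_mat_entry: "(\<lambda>A. A i j) \<in> borel_measurable matS"
  unfolding matS_def
  by (rule measurable_compose[where f = "\<lambda>A. A i"]) (rule measurable_component_singleton, simp)+

lemma measurable_matS:
  assumes "\<And>i j. (\<lambda>x. f x i j) \<in> borel_measurable N"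
  shows "f \<in> measurable N matS"
  unfolding matS_def
  by (intro measurable_PiM_single') (auto simp: space_PiM assms)

lemma measurable_mat_mul_right: "(\<lambda>A. mat_mul m k l A B) \<in> measurable matS matS"
  unfolding mat_mul_def
proof (intro measurable_matS)
  fix i j
  show "(\<lambda>A. if i < m \<and> j < l then \<Sum>p<k. A i p * B p j else 0) \<in> borel_measurable matS"
    by (cases "i < m \<and> j < l") (auto intro!: borel_measurable_sum borel_measurable_times measurable_mat_entry)
qed

lemma borel_measurable_layer:
  assumes "\<tau> \<in> borel_measurable borel"
    and "\<And>i j. (\<lambda>\<omega>. A \<omega> i j) \<in> borel_measurable N" and "\<And>j. (\<lambda>\<omega>. x \<omega> j) \<in> borel_measurable N"
  shows "(\<lambda>\<omega>. layer m k \<tau> (A \<omega>) (x \<omega>) i) \<in> borel_measurable N"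
  unfolding layer_def
  by (cases "i < m") (auto intro!: measurable_compose[OF _ assms(1)] borel_measurable_sum borel_measurable_times assms(2,3))

lemma borel_measurable_net:
  assumes "\<forall>\<tau>\<in>set \<sigma>s. \<tau> \<in> borel_measurable borel" and "l \<le> length \<sigma>s"
    and "\<And>l i j. (\<lambda>\<omega>. G \<omega> l i j) \<in> borel_measurable N" and "\<And>i. (\<lambda>\<omega>. x \<omega> i) \<in> borel_measurable N"
  shows "(\<lambda>\<omega>. net ks \<sigma>s (G \<omega>) l (x \<omega>) i) \<in> borel_measurable N"
  using assms(2)
proof (induction l arbitrary: i)
  case 0
  then show ?case using assms(4) by simp
next
  case (Suc l)
  then show ?case using assms(1,3) by (simp add: borel_measurable_layer)
qed

lemma measurable_conv_net:
  assumes "\<sigma> \<in> borel_measurable borel" and "\<forall>\<tau>\<in>set \<sigma>s. \<tau> \<in> borel_measurable borel"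
  shows "(\<lambda>(A, G) X. conv_net d w s n d2 \<sigma> A ks \<sigma>s G X)
    \<in> measurable (matS \<Otimes>\<^sub>M PiM UNIV (\<lambda>_. matS)) (PiM UNIV (\<lambda>_. borel))"
proof (intro measurable_PiM_single')
  let ?N = "matS \<Otimes>\<^sub>M PiM UNIV (\<lambda>_::nat. matS)"
  fix X
  have A: "(\<lambda>\<omega>. fst \<omega> i j) \<in> borel_measurable ?N" for i j
    by (rule measurable_compose[OF measurable_fst measurable_mat_entry])
  have "(\<lambda>\<omega>. snd \<omega> l) \<in> measurable ?N matS" for l
    by (rule measurable_compose[OF measurable_snd measurable_component_singleton]) simp
  then have G: "(\<lambda>\<omega>. snd \<omega> l i j) \<in> borel_measurable ?N" for l i j
    by (rule measurable_compose[OF _ measurable_mat_entry])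
  have "(\<lambda>\<omega>. conv_layer d w s n d2 \<sigma> (fst \<omega>) X i j) \<in> borel_measurable ?N" for i j
    unfolding conv_layer_def
    by (cases "i \<le> (n - w) div s") (simp_all add: borel_measurable_layer[OF assms(1) A])
  then have "(\<lambda>\<omega>. flatten d2 ((n - w) div s + 1) (conv_layer d w s n d2 \<sigma> (fst \<omega>) X) q)
      \<in> borel_measurable ?N" for q
    unfolding flatten_def by auto
  then show "(\<lambda>\<omega>. (case \<omega> of (A, G) \<Rightarrow> \<lambda>X. conv_net d w s n d2 \<sigma> A ks \<sigma>s G X) X) \<in> borel_measurable ?N"
    unfolding conv_net_def split_beta by (intro borel_measurable_net[OF assms(2) order_refl G])
qed (simp add: space_PiM)

lemma (in prob_space) indep_rv_prob_preimage:
  assumes "indep_rv M S X T Y" and "f \<in> measurable S S'" and "A \<in> sets S'" and "B \<in> sets T"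
  shows "prob ((\<lambda>\<omega>. f (X \<omega>)) -` A \<inter> Y -` B \<inter> space M)
    = prob ((\<lambda>\<omega>. f (X \<omega>)) -` A \<inter> space M) * prob (Y -` B \<inter> space M)"
proof -
  let ?A = "f -` A \<inter> space S"
  have "?A \<in> sets S" using assms(2,3) by (rule measurable_sets)
  have "X \<in> measurable M S" using assms(1) by (simp add: indep_rv_def)
  then have preimage: "(\<lambda>\<omega>. f (X \<omega>)) -` A \<inter> space M = X -` ?A \<inter> space M"
    by (auto dest: measurable_space)
  have "prob ((X -` ?A \<inter> space M) \<inter> (Y -` B \<inter> space M))
      = prob (X -` ?A \<inter> space M) * prob (Y -` B \<inter> space M)"
  proof (rule indep_setD)
    show "indep_set (sigma_sets (space M) {X -` A \<inter> space M | A. A \<in> sets S})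
        (sigma_sets (space M) {Y -` A \<inter> space M | A. A \<in> sets T})"
      using assms(1) by (simp add: indep_rv_def)
    show "X -` ?A \<inter> space M \<in> sigma_sets (space M) {X -` A \<inter> space M | A. A \<in> sets S}"
      using \<open>?A \<in> sets S\<close> by (intro sigma_sets.Basic) blast
    show "Y -` B \<inter> space M \<in> sigma_sets (space M) {Y -` A \<inter> space M | A. A \<in> sets T}"
      using assms(4) by (intro sigma_sets.Basic) blast
  qed
  moreover have "(\<lambda>\<omega>. f (X \<omega>)) -` A \<inter> Y -` B \<inter> space M = (X -` ?A \<inter> space M) \<inter> (Y -` B \<inter> space M)"
    using preimage by blast
  ultimately show ?thesis by (simp add: preimage)
qed

lemma (in prob_space) distr_pair_eq_pair_measure:
  assumes X: "X \<in> measurable M S" and Y: "Y \<in> measurable M T"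
    and indep: "\<And>A B. A \<in> sets S \<Longrightarrow> B \<in> sets T \<Longrightarrow>
       prob (X -` A \<inter> Y -` B \<inter> space M) = prob (X -` A \<inter> space M) * prob (Y -` B \<inter> space M)"
  shows "distr M (S \<Otimes>\<^sub>M T) (\<lambda>\<omega>. (X \<omega>, Y \<omega>)) = distr M S X \<Otimes>\<^sub>M distr M T Y"
proof -
  interpret PX: prob_space "distr M S X" by (rule prob_space_distr[OF X])
  interpret PY: prob_space "distr M T Y" by (rule prob_space_distr[OF Y])
  have XY: "(\<lambda>\<omega>. (X \<omega>, Y \<omega>)) \<in> measurable M (S \<Otimes>\<^sub>M T)" using X Y by (rule measurable_Pair)
  show ?thesis
  proof (rule pair_measure_eqI[symmetric])
    show "sigma_finite_measure (distr M S X)" "sigma_finite_measure (distr M T Y)"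
      by unfold_locales
    show "sets (distr M S X \<Otimes>\<^sub>M distr M T Y) = sets (distr M (S \<Otimes>\<^sub>M T) (\<lambda>\<omega>. (X \<omega>, Y \<omega>)))"
      by (simp only: sets_distr, rule sets_pair_measure_cong) (simp_all only: sets_distr)
  next
    fix A B assume "A \<in> sets (distr M S X)" "B \<in> sets (distr M T Y)"
    then have A: "A \<in> sets S" and B: "B \<in> sets T" by auto
    have "(\<lambda>\<omega>. (X \<omega>, Y \<omega>)) -` (A \<times> B) \<inter> space M = X -` A \<inter> Y -` B \<inter> space M" by auto
    then show "emeasure (distr M S X) A * emeasure (distr M T Y) B
       = emeasure (distr M (S \<Otimes>\<^sub>M T) (\<lambda>\<omega>. (X \<omega>, Y \<omega>))) (A \<times> B)"
      using indep[OF A B]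
      by (simp add: emeasure_distr X Y XY A B emeasure_eq_measure ennreal_mult)
  qed
qed

lemma (in prob_space) distr_indep_pair_cong:
  assumes indep: "indep_rv M S X T Y" and f: "f \<in> measurable S S"
    and law: "distr M S (\<lambda>\<omega>. f (X \<omega>)) = distr M S X" and g: "g \<in> measurable (S \<Otimes>\<^sub>M T) N"
  shows "distr M N (\<lambda>\<omega>. g (f (X \<omega>), Y \<omega>)) = distr M N (\<lambda>\<omega>. g (X \<omega>, Y \<omega>))"
proof -
  have X: "X \<in> measurable M S" and Y: "Y \<in> measurable M T" using indep by (simp_all add: indep_rv_def)
  have fX: "(\<lambda>\<omega>. f (X \<omega>)) \<in> measurable M S" using X f by measurable
  have "distr M (S \<Otimes>\<^sub>M T) (\<lambda>\<omega>. (f (X \<omega>), Y \<omega>)) = distr M (S \<Otimes>\<^sub>M T) (\<lambda>\<omega>. (X \<omega>, Y \<omega>))"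
    using indep_rv_prob_preimage[OF indep f] indep_rv_prob_preimage[OF indep measurable_ident]
    by (simp add: distr_pair_eq_pair_measure X Y fX law)
  then show ?thesis
    using distr_distr[OF g measurable_Pair[OF fX Y]] distr_distr[OF g measurable_Pair[OF X Y]]
    by (simp add: comp_def)
qed

theorem lemma2:
  fixes M :: "'a measure" and d n w s d2 :: nat and \<sigma> :: "real \<Rightarrow> real" and W :: "'a \<Rightarrow> mat"
    and ks :: "nat list" and \<sigma>s :: "(real \<Rightarrow> real) list" and Ws :: "'a \<Rightarrow> nat \<Rightarrow> mat" and U :: mat
  assumes "prob_space M"
    and "0 < s" and "w \<le> n" and "s dvd (n - w)"
    and "regular_random_matrix M d2 (d * w) W"
    and "\<sigma> \<in> borel_measurable borel"
    and "\<forall>\<tau>\<in>set \<sigma>s. \<tau> \<in> borel_measurable borel"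
    and "length ks = Suc (length \<sigma>s)" and "hd ks = ((n - w) div s + 1) * d2" and "last ks = 1"
    and "Ws \<in> measurable M (PiM UNIV (\<lambda>_. matS))"
    and "indep_rv M matS W (PiM UNIV (\<lambda>_. matS)) Ws"
    and "U \<in> SO d"
  shows "distr M (PiM UNIV (\<lambda>_. borel))
           (\<lambda>\<omega> X. conv_net d w s n d2 \<sigma> (W \<omega>) ks \<sigma>s (Ws \<omega>) (act d (mat_transpose U) X))
       = distr M (PiM UNIV (\<lambda>_. borel))
           (\<lambda>\<omega> X. conv_net d w s n d2 \<sigma> (W \<omega>) ks \<sigma>s (Ws \<omega>) X)"
proof -
  interpret prob_space M by fact
  define B where "B = block_diag d (mat_transpose U)"
  have "orthogonal_mat (d * w) B"
    using \<open>U \<in> SO d\<close> by (simp add: B_def SO_def orthogonal_mat_block_diag orthogonal_mat_transpose)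
  then have "distr M matS (\<lambda>\<omega>. mat_mul d2 (d * w) (d * w) (W \<omega>) B) = distr M matS W"
    using assms(5) by (simp add: regular_random_matrix_def)
  from distr_indep_pair_cong[OF assms(12) measurable_mat_mul_right this measurable_conv_net[OF assms(6,7)]]
  show ?thesis by (simp add: B_def conv_net_act)
qed

end
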